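(* Let $F$ be a discrete time regulatory network on $[0,1]^d$ satisfying coordinatewise injectivity whose interaction matrix $K$ is non-degenerated, and let $(V,\mathcal A)$ be its underlying network. If $\{i,j\}\subset V$ is a 2-loop in $(V,\mathcal A)$ whose isolated end is $j$, then $i$ drives $j$.
   Context: $V=\{1,\dots,d\}$; $K\in[0,1]^{d\times d}$ with $\sum_iK_{i,j}=1$ for each $j$; $s\in\{-1,0,1\}^{d\times d}$, $T\in[0,1]^{d\times d}$ with $s_{i,j}=0$ iff $K_{i,j}=0$ and $T_{i,j}=0$ iff $K_{i,j}=0$; $a\in[0,1]$; $H(x)=0$ for $x\le0$, $1$ otherwise; $F(x)_j=ax_j+(1-a)\sum_iK_{i,j}H(s_{i,j}(x_i-T_{i,j}))$. Underlying network: $\mathcal A=\{(i,j):K_{i,j}>0\}$. Coordinatewise injectivity: for each $j$, with $\mathcal F_j=\{x\mapsto ax+(1-a)\sum_i\epsilon_iK_{i,j}:\epsilon\in\{0,1\}^d\}$, distinct $f,f'\in\mathcal F_j$ have $f([0,1])\cap f'([0,1])=\emptyset$. $K$ is non-degenerated if for each $j$ the map $\epsilon\mapsto\sum_i\epsilon_iK_{i,j}$, defined on $\{\epsilon\in\{0,1\}^d:\epsilon_i=0$ whenever $K_{i,j}=0\}$, is injective. A 2-loop with isolated end $j$ is a pair $\{i,j\}$ such that $(i,j)\in\mathcal A$ and $i$ is the only tail of an arrow with head $j$, and $(j,i)\in\mathcal A$ and $i$ is the only head of an arrow with tail $j$. Base partition: $\mathcal P_k$ is the set of nonempty level sets of $u\mapsto(H(s_{k,l}(u-T_{k,l})))_{l=1}^d$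 on $[0,1]$, $\mathcal P=\{\prod_kI_k:I_k\in\mathcal P_k\}$; $\mathcal P^1=\mathcal P$, $\mathcal P^{t+1}=\{F^{-1}(\mathbf I)\cap\mathbf J\ne\emptyset:\mathbf I\in\mathcal P^t,\mathbf J\in\mathcal P\}$; $\mathcal Q^t=\{F^{t-1}(\mathbf I):\mathbf I\in\mathcal P^t\}$, $\mathcal Q_k^t=\{\Pi_k\mathbf J:\mathbf J\in\mathcal Q^t\}$ ($\Pi_k$ the $k$-th coordinate projection). For $J\in\mathcal Q_i^t$ let $C_j(J)=\{\Pi_j\mathbf J:\mathbf J\in\mathcal Q^t,\ \Pi_i\mathbf J=J\}$. Vertex $i$ drives vertex $j$ if there is $m_{i,j}\in\mathbb N$ with $\#C_j(J)\le m_{i,j}$ for all $J\in\bigcup_{t\ge1}\mathcal Q_i^t$. *)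

theory Defs
  imports Complex_Main
begin

text \<open>Vertices are the elements of a finite type 'n (playing the role of V = {1..d});
  points of [0,1]^d are functions 'n \<Rightarrow> real.\<close>

definition heav :: "real \<Rightarrow> real" where
  "heav x = (if x \<le> 0 then 0 else 1)"

definition regnet_params ::
  "real \<Rightarrow> ('n::finite \<Rightarrow> 'n \<Rightarrow> real) \<Rightarrow> ('n \<Rightarrow> 'n \<Rightarrow> real) \<Rightarrow> ('n \<Rightarrow> 'n \<Rightarrow> real) \<Rightarrow> bool" where
  "regnet_params a K s T \<longleftrightarrow>
     a \<in> {0..1} \<and>
     (\<forall>i j. K i j \<in> {0..1}) \<and>
     (\<forall>j. (\<Sum>i\<in>UNIV. K i j) = 1) \<and>
     (\<forall>i j. s i j \<in> {-1, 0, 1}) \<and>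
     (\<forall>i j. T i j \<in> {0..1}) \<and>
     (\<forall>i j. s i j = 0 \<longleftrightarrow> K i j = 0) \<and>
     (\<forall>i j. T i j = 0 \<longleftrightarrow> K i j = 0)"

definition regF ::
  "real \<Rightarrow> ('n::finite \<Rightarrow> 'n \<Rightarrow> real) \<Rightarrow> ('n \<Rightarrow> 'n \<Rightarrow> real) \<Rightarrow> ('n \<Rightarrow> 'n \<Rightarrow> real)
   \<Rightarrow> ('n \<Rightarrow> real) \<Rightarrow> ('n \<Rightarrow> real)" where
  "regF a K s T x = (\<lambda>j. a * x j + (1 - a) * (\<Sum>i\<in>UNIV. K i j * heav (s i j * (x i - T i j))))"

definition arrows :: "('n::finite \<Rightarrow> 'n \<Rightarrow> real) \<Rightarrow> ('n \<times> 'n) set" where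
  "arrows K = {(i, j). K i j > 0}"

definition binvecs :: "('n::finite \<Rightarrow> real) set" where
  "binvecs = {e. \<forall>i. e i \<in> {0, 1}}"

definition famF :: "real \<Rightarrow> ('n::finite \<Rightarrow> 'n \<Rightarrow> real) \<Rightarrow> 'n \<Rightarrow> ('n \<Rightarrow> real) \<Rightarrow> real \<Rightarrow> real" where
  "famF a K j e = (\<lambda>x. a * x + (1 - a) * (\<Sum>i\<in>UNIV. e i * K i j))"

definition coordinatewise_injective :: "real \<Rightarrow> ('n::finite \<Rightarrow> 'n \<Rightarrow> real) \<Rightarrow> bool" where
  "coordinatewise_injective a K \<longleftrightarrow>
     (\<forall>j. \<forall>f \<in> famF a K j ` binvecs. \<forall>f' \<in> famF a K j ` binvecs.
        f \<noteq> f' \<longrightarrow> f ` {0..1} \<inter> f' ` {0..1} = {})"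

definition non_degenerated :: "('n::finite \<Rightarrow> 'n \<Rightarrow> real) \<Rightarrow> bool" where
  "non_degenerated K \<longleftrightarrow>
     (\<forall>j. inj_on (\<lambda>e. \<Sum>i\<in>UNIV. e i * K i j) {e \<in> binvecs. \<forall>i. K i j = 0 \<longrightarrow> e i = 0})"

definition two_loop_isolated_end :: "('n::finite \<Rightarrow> 'n \<Rightarrow> real) \<Rightarrow> 'n \<Rightarrow> 'n \<Rightarrow> bool" where
  "two_loop_isolated_end K i j \<longleftrightarrow>
     (i, j) \<in> arrows K \<and> (\<forall>i'. (i', j) \<in> arrows K \<longrightarrow> i' = i) \<and>
     (j, i) \<in> arrows K \<and> (\<forall>j'. (j, j') \<in> arrows K \<longrightarrow> j' = i)"

definition baseP_k :: "('n::finite \<Rightarrow> 'n \<Rightarrow> real) \<Rightarrow> ('n \<Rightarrow> 'n \<Rightarrow> real) \<Rightarrow> 'n \<Rightarrow> real set set" where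
  "baseP_k s T k = {I. I \<noteq> {} \<and> (\<exists>v. I = {u \<in> {0..1}. (\<lambda>l. heav (s k l * (u - T k l))) = v})}"

definition baseP :: "('n::finite \<Rightarrow> 'n \<Rightarrow> real) \<Rightarrow> ('n \<Rightarrow> 'n \<Rightarrow> real) \<Rightarrow> ('n \<Rightarrow> real) set set" where
  "baseP s T = {{x. \<forall>k. x k \<in> I k} | I. \<forall>k. I k \<in> baseP_k s T k}"

text \<open>partP a K s T n is \<P>^{n+1}.\<close>
fun partP :: "real \<Rightarrow> ('n::finite \<Rightarrow> 'n \<Rightarrow> real) \<Rightarrow> ('n \<Rightarrow> 'n \<Rightarrow> real) \<Rightarrow> ('n \<Rightarrow> 'n \<Rightarrow> real)
   \<Rightarrow> nat \<Rightarrow> ('n \<Rightarrow> real) set set" where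
  "partP a K s T 0 = baseP s T"
| "partP a K s T (Suc n) =
     {regF a K s T -` I \<inter> J | I J. I \<in> partP a K s T n \<and> J \<in> baseP s T \<and> regF a K s T -` I \<inter> J \<noteq> {}}"

text \<open>partQ a K s T n is \<Q>^{n+1} = { F^n(I) : I \<in> \<P>^{n+1} }.\<close>
definition partQ :: "real \<Rightarrow> ('n::finite \<Rightarrow> 'n \<Rightarrow> real) \<Rightarrow> ('n \<Rightarrow> 'n \<Rightarrow> real) \<Rightarrow> ('n \<Rightarrow> 'n \<Rightarrow> real)
   \<Rightarrow> nat \<Rightarrow> ('n \<Rightarrow> real) set set" where
  "partQ a K s T n = (\<lambda>I. (regF a K s T ^^ n) ` I) ` partP a K s T n"

definition partQk :: "real \<Rightarrow> ('n::finite \<Rightarrow> 'n \<Rightarrow> real) \<Rightarrow> ('n \<Rightarrow> 'n \<Rightarrow> real) \<Rightarrow> ('n \<Rightarrow> 'n \<Rightarrow> real)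
   \<Rightarrow> nat \<Rightarrow> 'n \<Rightarrow> real set set" where
  "partQk a K s T n k = (\<lambda>J. (\<lambda>x. x k) ` J) ` partQ a K s T n"

definition Cset :: "real \<Rightarrow> ('n::finite \<Rightarrow> 'n \<Rightarrow> real) \<Rightarrow> ('n \<Rightarrow> 'n \<Rightarrow> real) \<Rightarrow> ('n \<Rightarrow> 'n \<Rightarrow> real)
   \<Rightarrow> nat \<Rightarrow> 'n \<Rightarrow> 'n \<Rightarrow> real set \<Rightarrow> real set set" where
  "Cset a K s T n i j J = {(\<lambda>x. x j) ` JJ | JJ. JJ \<in> partQ a K s T n \<and> (\<lambda>x. x i) ` JJ = J}"

text \<open>i drives j: the number of j-projections compatible with a given i-projection is
  uniformly bounded over all t \<ge> 1 (t = n+1).\<close>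
definition drives :: "real \<Rightarrow> ('n::finite \<Rightarrow> 'n \<Rightarrow> real) \<Rightarrow> ('n \<Rightarrow> 'n \<Rightarrow> real) \<Rightarrow> ('n \<Rightarrow> 'n \<Rightarrow> real)
   \<Rightarrow> 'n \<Rightarrow> 'n \<Rightarrow> bool" where
  "drives a K s T i j \<longleftrightarrow>
     (\<exists>m::nat. \<forall>n. \<forall>J \<in> partQk a K s T n i.
        finite (Cset a K s T n i j J) \<and> card (Cset a K s T n i j J) \<le> m)"

end

theory Submission
  imports Defs
begin

(* Vertex j receives input only from i and acts only on i, so
   F(x)_j = a x_j + (1-a) K_{i,j} H(s_{i,j}(x_i - T_{i,j})), and x_j influences the other
   coordinates only through the bit H(s_{j,i}(x_j - T_{j,i})).  For 0 < a < 1, coordinatewise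
   injectivity and non-degeneracy (with K_{j,i} > 0) recover from F^n(x)_i all earlier values
   F^t(x)_i together with all earlier values of that bit.  Hence, if two cells of Q^{n+1} have
   the same i-projection and the bit agrees at time n, transplanting the j-coordinate of a point
   of the first cell into a point of the second yields a point of the second cell with the same
   j-coordinate at time n.  So the j-projections are ordered by inclusion according to the bit,
   and there are at most two of them.  For a = 1 the map is the identity; for a = 0 the
   j-coordinate of F^n(x) lies in {0, K_{i,j}}, leaving at most four j-projections. *)

definition activation ::
  "('n::finite \<Rightarrow> 'n \<Rightarrow> real) \<Rightarrow> ('n \<Rightarrow> 'n \<Rightarrow> real) \<Rightarrow> ('n \<Rightarrow> real) \<Rightarrow> 'n \<Rightarrow> 'n \<Rightarrow> real" where
  "activation s T x k l = heav (s k l * (x k - T k l))"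

lemma heav_cases: "heav u = 0 \<or> heav u = 1"
  by (simp add: heav_def)

lemma activation_cases: "activation s T x k l = 0 \<or> activation s T x k l = 1"
  by (simp add: activation_def heav_cases)

lemma activation_fun_upd:
  "activation s T (x(m := u)) l k = (if l = m then heav (s m k * (u - T m k)) else activation s T x l k)"
  by (simp add: activation_def)

lemma activation_binvec: "(\<lambda>l. activation s T x l k) \<in> binvecs"
  by (simp add: binvecs_def activation_cases)

lemma regF_activation:
  "regF a K s T x k = a * x k + (1 - a) * (\<Sum>l\<in>UNIV. K l k * activation s T x l k)"
  by (simp add: regF_def activation_def)

lemma regF_one: "regF 1 K s T = id"
  by (simp add: regF_def fun_eq_iff)

lemma regF_in_cube:
  assumes params: "regnet_params a K s T" and x: "range x \<subseteq> {0..1}"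
  shows "range (regF a K s T x) \<subseteq> {0..1}"
proof safe
  fix k
  let ?S = "\<Sum>l\<in>UNIV. K l k * activation s T x l k"
  have a: "0 \<le> a" "a \<le> 1" and K: "\<And>l. 0 \<le> K l k" and K_sum: "(\<Sum>l\<in>UNIV. K l k) = 1"
    using params by (auto simp: regnet_params_def)
  have act: "0 \<le> activation s T x l k" "activation s T x l k \<le> 1" for l
    using activation_cases[of s T x l k] by auto
  have "0 \<le> ?S" using K act by (simp add: sum_nonneg)
  moreover have "?S \<le> 1"
    using sum_mono[of UNIV "\<lambda>l. K l k * activation s T x l k" "\<lambda>l. K l k"] K act K_sum
    by (simp add: mult_left_le)
  moreover have "x k \<in> {0..1}" using x by blast
  ultimately show "regF a K s T x k \<in> {0..1}"
    unfolding regF_activation using a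
    by (auto intro!: convex_bound_le simp: mult_left_le mult_le_one)
qed

lemma funpow_regF_in_cube:
  "regnet_params a K s T \<Longrightarrow> range x \<subseteq> {0..1} \<Longrightarrow> range ((regF a K s T ^^ t) x) \<subseteq> {0..1}"
  by (induction t) (auto simp del: image_subset_iff dest: regF_in_cube)

lemma baseP_cell_iff:
  assumes "B \<in> baseP s T" "x \<in> B"
  shows "y \<in> B \<longleftrightarrow> range y \<subseteq> {0..1} \<and> activation s T y = activation s T x"
proof -
  obtain I where B: "B = {z. \<forall>k. z k \<in> I k}" and I: "\<And>k. I k \<in> baseP_k s T k"
    using assms(1) unfolding baseP_def by blast
  have act: "activation s T z k = (\<lambda>l. heav (s k l * (z k - T k l)))" for z k
    by (simp add: activation_def fun_eq_iff)
  have coord: "y k \<in> I k \<longleftrightarrow> y k \<in> {0..1} \<and> activation s T y k = activation s T x k" for k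
  proof -
    obtain v where v: "I k = {u \<in> {0..1}. (\<lambda>l. heav (s k l * (u - T k l))) = v}"
      using I unfolding baseP_k_def by blast
    have "x k \<in> I k" using assms(2) B by blast
    then show ?thesis unfolding act v by simp
  qed
  have "y \<in> B \<longleftrightarrow> (\<forall>k. y k \<in> {0..1}) \<and> (\<forall>k. activation s T y k = activation s T x k)"
    unfolding B mem_Collect_eq coord by blast
  then show ?thesis by (simp add: image_subset_iff fun_eq_iff[of "activation s T y"])
qed

lemma baseP_nonempty:
  assumes "B \<in> baseP s T"
  shows "B \<noteq> {}"
proof -
  obtain I where B: "B = {z. \<forall>k. z k \<in> I k}" and I: "\<And>k. I k \<noteq> {}"
    using assms unfolding baseP_def baseP_k_def by blast
  have "(\<lambda>k. SOME u. u \<in> I k) \<in> B" unfolding B using I by (simp add: some_in_eq)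
  then show ?thesis by blast
qed

lemma partP_itinerary:
  "X \<in> partP a K s T n \<Longrightarrow>
     \<exists>B. (\<forall>t\<le>n. B t \<in> baseP s T) \<and> X = {x. \<forall>t\<le>n. (regF a K s T ^^ t) x \<in> B t}"
proof (induction n arbitrary: X)
  case 0
  then show ?case by (intro exI[of _ "\<lambda>_. X"]) auto
next
  case (Suc n)
  then obtain Y J where X: "X = regF a K s T -` Y \<inter> J"
    and Y: "Y \<in> partP a K s T n" and J: "J \<in> baseP s T"
    by auto
  obtain B where B: "\<forall>t\<le>n. B t \<in> baseP s T" "Y = {x. \<forall>t\<le>n. (regF a K s T ^^ t) x \<in> B t}"
    using Suc.IH[OF Y] by blast
  have all_le_Suc: "(\<forall>t\<le>Suc n. P t) \<longleftrightarrow> P 0 \<and> (\<forall>t\<le>n. P (Suc t))" for P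
    by (metis Suc_le_mono le0 not0_implies_Suc)
  have "\<forall>t\<le>Suc n. case_nat J B t \<in> baseP s T"
    unfolding all_le_Suc using B(1) J by simp
  moreover have "X = {x. \<forall>t\<le>Suc n. (regF a K s T ^^ t) x \<in> case_nat J B t}"
    unfolding all_le_Suc X B(2) by (auto simp: funpow_swap1)
  ultimately show ?case by (intro exI[of _ "case_nat J B"]) simp
qed

lemma partP_nonempty: "X \<in> partP a K s T n \<Longrightarrow> X \<noteq> {}"
  by (cases n) (auto dest: baseP_nonempty)

lemma partP_cell_iff:
  assumes "X \<in> partP a K s T n" "x \<in> X"
  shows "y \<in> X \<longleftrightarrow> (\<forall>t\<le>n. range ((regF a K s T ^^ t) y) \<subseteq> {0..1} \<and>
      activation s T ((regF a K s T ^^ t) y) = activation s T ((regF a K s T ^^ t) x))"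
proof -
  obtain B where B: "\<And>t. t \<le> n \<Longrightarrow> B t \<in> baseP s T"
    and X: "X = {x. \<forall>t\<le>n. (regF a K s T ^^ t) x \<in> B t}"
    using partP_itinerary[OF assms(1)] by blast
  have "(regF a K s T ^^ t) x \<in> B t" if "t \<le> n" for t
    using assms(2) that unfolding X by blast
  then have "(regF a K s T ^^ t) y \<in> B t \<longleftrightarrow> range ((regF a K s T ^^ t) y) \<subseteq> {0..1} \<and>
      activation s T ((regF a K s T ^^ t) y) = activation s T ((regF a K s T ^^ t) x)"
    if "t \<le> n" for t
    using baseP_cell_iff[OF B] that by blast
  then show ?thesis unfolding X by blast
qed

lemma partP_orbit_in_cube:
  assumes "X \<in> partP a K s T n" "x \<in> X" "t \<le> n"
  shows "range ((regF a K s T ^^ t) x) \<subseteq> {0..1}"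
proof -
  have "\<forall>t\<le>n. range ((regF a K s T ^^ t) x) \<subseteq> {0..1} \<and>
      activation s T ((regF a K s T ^^ t) x) = activation s T ((regF a K s T ^^ t) x)"
    by (rule iffD1[OF partP_cell_iff[OF assms(1,2)] assms(2)])
  then show ?thesis using assms(3) by simp
qed

lemma partP_activation_eq:
  assumes "X \<in> partP a K s T n" "x \<in> X" "y \<in> X" "t \<le> n"
  shows "activation s T ((regF a K s T ^^ t) y) = activation s T ((regF a K s T ^^ t) x)"
proof -
  have "\<forall>t\<le>n. range ((regF a K s T ^^ t) y) \<subseteq> {0..1} \<and>
      activation s T ((regF a K s T ^^ t) y) = activation s T ((regF a K s T ^^ t) x)"
    by (rule iffD1[OF partP_cell_iff[OF assms(1,2)] assms(3)])
  then show ?thesis using assms(4) by simp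
qed

lemma regF_famF: "regF a K s T x k = famF a K k (\<lambda>l. activation s T x l k) (x k)"
  by (simp add: regF_activation famF_def mult.commute)

lemma famF_eq_if_regF_coord_eq:
  assumes "coordinatewise_injective a K" "x k \<in> {0..1}" "y k \<in> {0..1}"
    and "regF a K s T x k = regF a K s T y k"
  shows "famF a K k (\<lambda>l. activation s T x l k) = famF a K k (\<lambda>l. activation s T y l k)"
proof (rule ccontr)
  let ?f = "famF a K k (\<lambda>l. activation s T x l k)" and ?g = "famF a K k (\<lambda>l. activation s T y l k)"
  assume "?f \<noteq> ?g"
  then have "?f ` {0..1} \<inter> ?g ` {0..1} = {}"
    using assms(1) activation_binvec unfolding coordinatewise_injective_def by blast
  moreover have "?f (x k) = ?g (y k)" using assms(4) by (simp only: regF_famF)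
  ultimately show False using assms(2,3) by blast
qed

lemma non_degenerated_weights_eq:
  assumes "non_degenerated K" "\<epsilon> \<in> binvecs" "\<epsilon>' \<in> binvecs"
    and "(\<Sum>l\<in>UNIV. \<epsilon> l * K l k) = (\<Sum>l\<in>UNIV. \<epsilon>' l * K l k)" and "K l k \<noteq> 0"
  shows "\<epsilon> l = \<epsilon>' l"
proof -
  let ?restrict = "\<lambda>\<epsilon> l. if K l k = 0 then 0 else \<epsilon> l"
  let ?S = "{e \<in> binvecs. \<forall>l. K l k = 0 \<longrightarrow> e l = 0}"
  have "?restrict \<epsilon> \<in> ?S" "?restrict \<epsilon>' \<in> ?S" using assms(2,3) by (auto simp: binvecs_def)
  moreover have "(\<Sum>l\<in>UNIV. ?restrict e l * K l k) = (\<Sum>l\<in>UNIV. e l * K l k)" for e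
    by (rule sum.cong) auto
  moreover have "inj_on (\<lambda>e. \<Sum>l\<in>UNIV. e l * K l k) ?S"
    using assms(1) unfolding non_degenerated_def by blast
  ultimately have "?restrict \<epsilon> = ?restrict \<epsilon>'"
    using assms(4) by (simp add: inj_on_def)
  from fun_cong[OF this, of l] show ?thesis using assms(5) by simp
qed

lemma regF_coord_eq_imp_inputs_eq:
  assumes CI: "coordinatewise_injective a K" and ND: "non_degenerated K" and a: "0 < a" "a < 1"
    and x: "x k \<in> {0..1}" and y: "y k \<in> {0..1}" and eq: "regF a K s T x k = regF a K s T y k"
  shows "x k = y k" and "K l k \<noteq> 0 \<Longrightarrow> activation s T x l k = activation s T y l k"
proof -
  have famF: "famF a K k (\<lambda>l. activation s T x l k) = famF a K k (\<lambda>l. activation s T y l k)"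
    using famF_eq_if_regF_coord_eq[OF CI x y eq] .
  from fun_cong[OF famF, of 0] a
  have sums: "(\<Sum>l\<in>UNIV. activation s T x l k * K l k) = (\<Sum>l\<in>UNIV. activation s T y l k * K l k)"
    by (simp add: famF_def)
  show "x k = y k"
    using eq a unfolding regF_famF famF by (simp add: famF_def)
  show "K l k \<noteq> 0 \<Longrightarrow> activation s T x l k = activation s T y l k"
    using non_degenerated_weights_eq[OF ND activation_binvec activation_binvec sums] .
qed

lemma mem_Cset_iff:
  "c \<in> Cset a K s T n i j J \<longleftrightarrow> (\<exists>X\<in>partP a K s T n.
     c = (\<lambda>x. x j) ` (regF a K s T ^^ n) ` X \<and> (\<lambda>x. x i) ` (regF a K s T ^^ n) ` X = J)"
  by (auto simp: Cset_def partQ_def)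

lemma drives_refl: "drives a K s T i i"
proof -
  have "Cset a K s T n i i J \<subseteq> {J}" for n J by (auto simp: mem_Cset_iff)
  then have "finite (Cset a K s T n i i J) \<and> card (Cset a K s T n i i J) \<le> 1" for n J
    using card_mono[of "{J}"] finite_subset[of _ "{J}"] by fastforce
  then show ?thesis unfolding drives_def by blast
qed

lemma finite_if_inj_on_rel:
  assumes "finite B" "\<And>a. a \<in> A \<Longrightarrow> \<exists>b. b \<in> B \<and> r a b"
    and "\<And>a1 a2 b. \<lbrakk>a1 \<in> A; a2 \<in> A; b \<in> B; r a1 b; r a2 b\<rbrakk> \<Longrightarrow> a1 = a2"
  shows "finite A"
proof -
  have "A \<subseteq> (\<lambda>b. THE a. a \<in> A \<and> r a b) ` B"
  proof
    fix a assume "a \<in> A"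
    then obtain b where b: "b \<in> B" "r a b" using assms(2) by blast
    then have "(THE a'. a' \<in> A \<and> r a' b) = a"
      using \<open>a \<in> A\<close> assms(3) by (intro the_equality) blast+
    then show "a \<in> (\<lambda>b. THE a. a \<in> A \<and> r a b) ` B" using b(1) by force
  qed
  then show ?thesis using assms(1) finite_surj by blast
qed

locale isolated_two_loop =
  fixes a :: real and K s T :: "'n::finite \<Rightarrow> 'n \<Rightarrow> real" and i j :: 'n
  assumes params: "regnet_params a K s T"
    and two_loop: "two_loop_isolated_end K i j"
    and distinct_ends: "i \<noteq> j"
begin

abbreviation F :: "('n \<Rightarrow> real) \<Rightarrow> 'n \<Rightarrow> real" where
  "F \<equiv> regF a K s T"

lemma orbit_in_cube: "range x \<subseteq> {0..1} \<Longrightarrow> (F ^^ t) x k \<in> {0..1}"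
  using funpow_regF_in_cube[OF params] by blast

lemma K_eq_0_if_not_arrow:
  assumes "(l, k) \<notin> arrows K"
  shows "K l k = 0"
proof -
  have "0 \<le> K l k" using params by (simp add: regnet_params_def)
  then show ?thesis using assms by (simp add: arrows_def)
qed

lemma K_into_isolated_end: "l \<noteq> i \<Longrightarrow> K l j = 0"
  using two_loop K_eq_0_if_not_arrow unfolding two_loop_isolated_end_def by blast

lemma K_out_of_isolated_end: "k \<noteq> i \<Longrightarrow> K j k = 0"
  using two_loop K_eq_0_if_not_arrow unfolding two_loop_isolated_end_def by blast

lemma K_isolated_end_to_i: "K j i \<noteq> 0"
  using two_loop unfolding two_loop_isolated_end_def arrows_def by auto

lemma activation_out_of_isolated_end:
  assumes "k \<noteq> i"
  shows "activation s T x j k = 0"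
proof -
  have "s j k = 0" using K_out_of_isolated_end[OF assms] params by (simp add: regnet_params_def)
  then show ?thesis by (simp add: activation_def heav_def)
qed

lemma F_isolated_end: "F x j = a * x j + (1 - a) * K i j * activation s T x i j"
proof -
  have "(\<Sum>l\<in>UNIV. K l j * activation s T x l j) = K i j * activation s T x i j"
    using K_into_isolated_end by (subst sum.remove[of _ i]) auto
  then show ?thesis by (simp add: regF_activation)
qed

lemma F_swap_isolated_end:
  assumes "x i = y i" "activation s T x j i = activation s T y j i"
  shows "F (x(j := y j)) = (F x)(j := F y j)"
proof
  fix k
  show "F (x(j := y j)) k = ((F x)(j := F y j)) k"
  proof (cases "k = j")
    case True
    then show ?thesis
      using assms(1) distinct_ends by (simp add: F_isolated_end activation_fun_upd activation_def)
  next
    case False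
    have "K l k * activation s T (x(j := y j)) l k = K l k * activation s T x l k" for l
      using assms(2) K_out_of_isolated_end
      by (cases "k = i") (auto simp: activation_fun_upd activation_def)
    then have "(\<Sum>l\<in>UNIV. K l k * activation s T (x(j := y j)) l k)
        = (\<Sum>l\<in>UNIV. K l k * activation s T x l k)"
      by (rule sum.cong[OF refl])
    then show ?thesis using False by (simp add: regF_activation)
  qed
qed

lemma orbit_swap_isolated_end:
  assumes "\<And>t. t < n \<Longrightarrow>
      (F ^^ t) x i = (F ^^ t) y i \<and> activation s T ((F ^^ t) x) j i = activation s T ((F ^^ t) y) j i"
  shows "t \<le> n \<Longrightarrow> (F ^^ t) (x(j := y j)) = ((F ^^ t) x)(j := (F ^^ t) y j)"
proof (induction t)
  case 0
  then show ?case by simp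
next
  case (Suc t)
  then have "t < n" by simp
  have "(F ^^ t) (x(j := y j)) = ((F ^^ t) x)(j := (F ^^ t) y j)"
    using Suc by (simp add: fun_upd_def)
  then have "(F ^^ Suc t) (x(j := y j)) = F (((F ^^ t) x)(j := (F ^^ t) y j))"
    by (simp only: funpow.simps comp_apply)
  also have "\<dots> = (F ((F ^^ t) x))(j := F ((F ^^ t) y) j)"
    using assms[OF \<open>t < n\<close>] by (intro F_swap_isolated_end) auto
  finally show ?case by (simp add: fun_upd_def)
qed

lemma card_Cset_le_4_if_a_0:
  assumes "a = 0" "0 < n"
  shows "finite (Cset a K s T n i j J) \<and> card (Cset a K s T n i j J) \<le> 4"
proof -
  obtain m where n: "n = Suc m" using assms(2) gr0_implies_Suc by blast
  have "(F ^^ n) x j = K i j * activation s T ((F ^^ m) x) i j" for x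
    unfolding n funpow.simps comp_apply F_isolated_end using assms(1) by simp
  then have j_values: "(F ^^ n) x j \<in> {0, K i j}" for x
    using activation_cases[of s T "(F ^^ m) x" i j] by auto
  have sub: "Cset a K s T n i j J \<subseteq> Pow {0, K i j}"
  proof
    fix c assume "c \<in> Cset a K s T n i j J"
    then obtain X where "c = (\<lambda>x. x j) ` (F ^^ n) ` X" unfolding mem_Cset_iff by blast
    then show "c \<in> Pow {0, K i j}" using j_values by blast
  qed
  have "card {0, K i j} \<le> 2" by (simp add: card_insert_le_m1)
  then have "card (Pow {0, K i j}) \<le> 4"
    using power_increasing[of "card {0, K i j}" 2 "2::nat"] by (simp add: card_Pow)
  then show ?thesis using sub card_mono[OF _ sub] finite_subset[OF sub] by simp
qed

end

locale isolated_two_loop_injective = isolated_two_loop +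
  assumes coord_inj: "coordinatewise_injective a K"
    and non_deg: "non_degenerated K"
begin

lemma orbit_i_determines_past_i:
  assumes a: "0 < a" "a < 1" and x: "range x \<subseteq> {0..1}" and y: "range y \<subseteq> {0..1}"
    and "t \<le> n" and eq: "(F ^^ n) x i = (F ^^ n) y i"
  shows "(F ^^ t) x i = (F ^^ t) y i"
  using \<open>t \<le> n\<close>
proof (induction rule: inc_induct)
  case base
  show ?case using eq .
next
  case (step m)
  then have "F ((F ^^ m) x) i = F ((F ^^ m) y) i" by simp
  then show ?case
    by (rule regF_coord_eq_imp_inputs_eq(1)[OF coord_inj non_deg a orbit_in_cube[OF x] orbit_in_cube[OF y]])
qed

lemma orbits_agree_before:
  assumes "a \<noteq> 0 \<or> n = 0" and x: "range x \<subseteq> {0..1}" and y: "range y \<subseteq> {0..1}"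
    and eq_i: "(F ^^ n) x i = (F ^^ n) y i"
    and eq_act: "activation s T ((F ^^ n) x) j i = activation s T ((F ^^ n) y) j i"
    and "t \<le> n"
  shows "(F ^^ t) x i = (F ^^ t) y i \<and> activation s T ((F ^^ t) x) j i = activation s T ((F ^^ t) y) j i"
proof (cases "t = n")
  case True
  then show ?thesis using eq_i eq_act by simp
next
  case False
  with \<open>t \<le> n\<close> have "t < n" by simp
  have "0 \<le> a" "a \<le> 1" using params by (auto simp: regnet_params_def)
  with assms(1) \<open>t < n\<close> consider "a = 1" | "0 < a" "a < 1" by fastforce
  then show ?thesis
  proof cases
    case 1
    then show ?thesis using eq_i eq_act by (simp add: regF_one)
  next
    case a: 2
    have "(F ^^ Suc t) x i = (F ^^ Suc t) y i"
      by (rule orbit_i_determines_past_i[OF a x y _ eq_i]) (use \<open>t < n\<close> in simp)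
    then have "F ((F ^^ t) x) i = F ((F ^^ t) y) i" by simp
    note decode = regF_coord_eq_imp_inputs_eq[OF coord_inj non_deg a
        orbit_in_cube[OF x] orbit_in_cube[OF y] this]
    show ?thesis using decode(1) decode(2)[OF K_isolated_end_to_i] ..
  qed
qed

lemma swapped_point_in_cell:
  assumes a: "a \<noteq> 0 \<or> n = 0"
    and X: "X \<in> partP a K s T n" "x \<in> X" and Y: "Y \<in> partP a K s T n" "y \<in> Y"
    and eq_i: "(F ^^ n) x i = (F ^^ n) y i"
    and eq_act: "activation s T ((F ^^ n) x) j i = activation s T ((F ^^ n) y) j i"
  shows "y(j := x j) \<in> Y" and "(F ^^ n) (y(j := x j)) j = (F ^^ n) x j"
proof -
  have x_cube: "range ((F ^^ t) x) \<subseteq> {0..1}" if "t \<le> n" for t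
    using partP_orbit_in_cube[OF X that] .
  have y_cube: "range ((F ^^ t) y) \<subseteq> {0..1}" if "t \<le> n" for t
    using partP_orbit_in_cube[OF Y that] .
  have past: "(F ^^ t) y i = (F ^^ t) x i \<and>
      activation s T ((F ^^ t) y) j i = activation s T ((F ^^ t) x) j i" if "t \<le> n" for t
    using orbits_agree_before[OF a _ _ eq_i[symmetric] eq_act[symmetric] that] x_cube[of 0] y_cube[of 0]
    by simp
  have swap: "(F ^^ t) (y(j := x j)) = ((F ^^ t) y)(j := (F ^^ t) x j)" if "t \<le> n" for t
    by (rule orbit_swap_isolated_end[of n]) (use past that in auto)
  then show "(F ^^ n) (y(j := x j)) j = (F ^^ n) x j" by simp
  have "activation s T ((F ^^ t) (y(j := x j))) = activation s T ((F ^^ t) y)" if "t \<le> n" for t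
  proof (intro ext)
    fix k l
    show "activation s T ((F ^^ t) (y(j := x j))) k l = activation s T ((F ^^ t) y) k l"
      using past[OF that] activation_out_of_isolated_end
      by (cases "l = i") (auto simp: swap[OF that] activation_fun_upd activation_def)
  qed
  moreover have "range ((F ^^ t) (y(j := x j))) \<subseteq> {0..1}" if "t \<le> n" for t
    using x_cube[OF that] y_cube[OF that] unfolding swap[OF that] by (auto simp: image_subset_iff)
  ultimately have "\<forall>t\<le>n. range ((F ^^ t) (y(j := x j))) \<subseteq> {0..1} \<and>
      activation s T ((F ^^ t) (y(j := x j))) = activation s T ((F ^^ t) y)"
    by blast
  then show "y(j := x j) \<in> Y" by (rule iffD2[OF partP_cell_iff[OF Y]])
qed

lemma proj_isolated_end_mono:
  assumes a: "a \<noteq> 0 \<or> n = 0"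
    and X: "X \<in> partP a K s T n" "x \<in> X" and Y: "Y \<in> partP a K s T n" "y \<in> Y"
    and proj_i: "(\<lambda>z. z i) ` (F ^^ n) ` X = (\<lambda>z. z i) ` (F ^^ n) ` Y"
    and eq_act: "activation s T ((F ^^ n) x) j i = activation s T ((F ^^ n) y) j i"
  shows "(\<lambda>z. z j) ` (F ^^ n) ` X \<subseteq> (\<lambda>z. z j) ` (F ^^ n) ` Y"
proof
  fix c assume "c \<in> (\<lambda>z. z j) ` (F ^^ n) ` X"
  then obtain x' where x': "x' \<in> X" "c = (F ^^ n) x' j" by blast
  then have "(F ^^ n) x' i \<in> (\<lambda>z. z i) ` (F ^^ n) ` Y" using proj_i by blast
  then obtain y' where y': "y' \<in> Y" "(F ^^ n) x' i = (F ^^ n) y' i" by auto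
  have "activation s T ((F ^^ n) x') = activation s T ((F ^^ n) x)"
    using partP_activation_eq[OF X(1) X(2) x'(1) order_refl] .
  moreover have "activation s T ((F ^^ n) y') = activation s T ((F ^^ n) y)"
    using partP_activation_eq[OF Y(1) Y(2) y'(1) order_refl] .
  ultimately have "activation s T ((F ^^ n) x') j i = activation s T ((F ^^ n) y') j i"
    using eq_act by simp
  note swapped = swapped_point_in_cell[OF a X(1) x'(1) Y(1) y'(1) y'(2) this]
  show "c \<in> (\<lambda>z. z j) ` (F ^^ n) ` Y"
    using swapped x'(2) by (metis image_eqI)
qed

lemma card_Cset_le_2:
  assumes a: "a \<noteq> 0 \<or> n = 0"
  shows "finite (Cset a K s T n i j J) \<and> card (Cset a K s T n i j J) \<le> 2"
proof -
  define marked where "marked c b \<longleftrightarrow> (\<exists>X\<in>partP a K s T n.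
      c = (\<lambda>z. z j) ` (F ^^ n) ` X \<and> (\<lambda>z. z i) ` (F ^^ n) ` X = J \<and>
      (\<exists>x\<in>X. activation s T ((F ^^ n) x) j i = b))" for c b
  have marked_ex: "\<exists>b. b \<in> {0, 1} \<and> marked c b" if c: "c \<in> Cset a K s T n i j J" for c
  proof -
    obtain X where X: "X \<in> partP a K s T n" "c = (\<lambda>z. z j) ` (F ^^ n) ` X"
      "(\<lambda>z. z i) ` (F ^^ n) ` X = J"
      using c unfolding mem_Cset_iff by blast
    obtain x where "x \<in> X" using partP_nonempty[OF X(1)] by blast
    then show ?thesis
      using X activation_cases[of s T "(F ^^ n) x" j i] unfolding marked_def by blast
  qed
  have marked_inj: "c = c'"
    if "c \<in> Cset a K s T n i j J" "c' \<in> Cset a K s T n i j J" "b \<in> {0, 1}" "marked c b" "marked c' b"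
    for c c' b
    using that(4,5) proj_isolated_end_mono[OF a] unfolding marked_def by (metis subset_antisym)
  have finite_01: "finite {0, 1::real}" by simp
  have "finite (Cset a K s T n i j J)"
    using finite_01 marked_ex marked_inj by (rule finite_if_inj_on_rel)
  moreover have "card (Cset a K s T n i j J) \<le> card {0, 1::real}"
    using finite_01 marked_ex marked_inj by (rule card_le_if_inj_on_rel)
  ultimately show ?thesis by simp
qed

lemma drives_isolated_end: "drives a K s T i j"
proof -
  have "finite (Cset a K s T n i j J) \<and> card (Cset a K s T n i j J) \<le> 4" for n J
    using card_Cset_le_2[of n J] card_Cset_le_4_if_a_0[of n J] by fastforce
  then show ?thesis unfolding drives_def by blast
qed

end

theorem mainTheorem10:
  fixes a :: real and K s T :: "'n::finite \<Rightarrow> 'n \<Rightarrow> real" and i j :: 'n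
  assumes "regnet_params a K s T"
    and "coordinatewise_injective a K"
    and "non_degenerated K"
    and "two_loop_isolated_end K i j"
  shows "drives a K s T i j"
proof (cases "i = j")
  case True
  then show ?thesis using drives_refl by simp
next
  case False
  then interpret isolated_two_loop_injective a K s T i j
    using assms by unfold_locales
  show ?thesis by (rule drives_isolated_end)
qed

end
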